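(* Let $\rho_{ab}$ be a two-qubit state (density matrix on $\mathbb{C}^2\otimes\mathbb{C}^2$), with entries $\rho_{ij}$ in the product computational basis $\{|00\rangle,|01\rangle,|10\rangle,|11\rangle\}$ indexed by $i,j\in\{1,2,3,4\}$. Suppose one can choose arguments $\theta_{ij}\in[0,2\pi]$ of the entries ($\rho_{ij}=|\rho_{ij}|e^{\mathfrak{i}\theta_{ij}}$, arbitrary when $\rho_{ij}=0$) such that for all $i,k,j$ there is an integer $n$ with $\theta_{ik}+\theta_{kj}=2n\pi+\theta_{ij}$. Let $\rho_a=\mathrm{Tr}_b\rho_{ab}$ and $\rho_b=\mathrm{Tr}_a\rho_{ab}$. Then $$F_c(\rho_a)+F_c(\rho_b)\le 2F_c(\rho_{ab})+\frac12.$$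
   Context: Coherence is taken with respect to the computational (product) basis. For a single qubit, the maximally coherent states are $\mathcal{M}=\{\frac{1}{\sqrt2}(e^{\mathfrak{i}\theta_0}|0\rangle+e^{\mathfrak{i}\theta_1}|1\rangle):\theta_0,\theta_1\in[0,2\pi]\}$ and $F_c(\sigma)=\max_{|\phi\rangle\in\mathcal{M}}\langle\phi|\sigma|\phi\rangle$. For two qubits, the bipartite maximally coherent states are $\mathcal{M}_2=\{\frac12\sum_{k,l=0}^{1}e^{\mathfrak{i}\theta_{kl}}|kl\rangle:\theta_{kl}\in[0,2\pi]\}$ and the (global) coherence fraction is $F_c(\rho_{ab})=\max_{|\phi\rangle\in\mathcal{M}_2}\langle\phi|\rho_{ab}|\phi\rangle$. *)

theory Defs
  imports "HOL-Analysis.Analysis"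
begin

text \<open>A d-dimensional matrix is represented by its entries \<open>M i j\<close> for \<open>i, j < d\<close>
  (0-based; index \<open>2*k + l\<close> corresponds to the product basis vector |kl>).\<close>

definition density_matrix :: "nat \<Rightarrow> (nat \<Rightarrow> nat \<Rightarrow> complex) \<Rightarrow> bool" where
  "density_matrix d M \<longleftrightarrow>
     (\<forall>i<d. \<forall>j<d. M j i = cnj (M i j)) \<and>
     (\<forall>v :: nat \<Rightarrow> complex. 0 \<le> Re (\<Sum>i<d. \<Sum>j<d. cnj (v i) * M i j * v j)) \<and>
     (\<Sum>i<d. M i i) = 1"

text \<open>Expectation \<open>\<langle>\<phi>|M|\<phi>\<rangle>\<close> for the maximally coherent state
  \<open>\<phi> = d^(-1/2) \<Sum>_i e^(i \<theta>_i) |i>\<close>.\<close>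
definition mc_expect :: "nat \<Rightarrow> (nat \<Rightarrow> nat \<Rightarrow> complex) \<Rightarrow> (nat \<Rightarrow> real) \<Rightarrow> complex" where
  "mc_expect d M \<theta> =
     (\<Sum>i<d. \<Sum>j<d. cnj (cis (\<theta> i) / complex_of_real (sqrt (real d))) * M i j
                        * (cis (\<theta> j) / complex_of_real (sqrt (real d))))"

text \<open>Coherence fraction: maximum over all maximally coherent states (phases in [0,2pi]).
  For Hermitian M the expectation is real, so we take its real part.\<close>
definition coh_frac :: "nat \<Rightarrow> (nat \<Rightarrow> nat \<Rightarrow> complex) \<Rightarrow> real" where
  "coh_frac d M = (SUP \<theta>\<in>{\<theta>. \<forall>i<d. \<theta> i \<in> {0..2*pi}}. Re (mc_expect d M \<theta>))"

definition ptrace_b :: "(nat \<Rightarrow> nat \<Rightarrow> complex) \<Rightarrow> nat \<Rightarrow> nat \<Rightarrow> complex" where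
  "ptrace_b M i j = (\<Sum>k<2. M (2*i + k) (2*j + k))"

definition ptrace_a :: "(nat \<Rightarrow> nat \<Rightarrow> complex) \<Rightarrow> nat \<Rightarrow> nat \<Rightarrow> complex" where
  "ptrace_a M k l = (\<Sum>i<2. M (2*i + k) (2*i + l))"

end

theory Submission
  imports Defs
begin

text \<open>Every maximally coherent state gives \<open>\<langle>\<phi>|M|\<phi>\<rangle> \<le> (\<Sum>\<^sub>i\<^sub>j |M\<^sub>i\<^sub>j|)/d\<close>, so the coherence
  fraction is bounded by the entry norm sum. If the phases of \<open>\<rho>\<close> form a cocycle modulo \<open>2\<pi>\<close>,
  the state with phases \<open>\<theta>\<^sub>i\<^sub>0\<close> rotates every entry onto the positive real axis, and the bound
  is attained: \<open>F\<^sub>c(\<rho>) = (\<Sum>\<^sub>i\<^sub>j |\<rho>\<^sub>i\<^sub>j|)/4\<close>. For the reduced states the bound and the triangle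
  inequality give \<open>2F\<^sub>c(\<rho>\<^sub>a) + 2F\<^sub>c(\<rho>\<^sub>b) \<le> \<Sum>\<^sub>i\<^sub>j |\<rho>\<^sub>i\<^sub>j| + \<Sum>\<^sub>i \<rho>\<^sub>i\<^sub>i = 4F\<^sub>c(\<rho>) + 1\<close>.\<close>

definition entry_norm_sum :: "nat \<Rightarrow> (nat \<Rightarrow> nat \<Rightarrow> complex) \<Rightarrow> real" where
  "entry_norm_sum d M = (\<Sum>i<d. \<Sum>j<d. cmod (M i j))"

lemma mc_expect_eq:
  assumes "0 < d"
  shows "mc_expect d M \<theta> = (\<Sum>i<d. \<Sum>j<d. cnj (cis (\<theta> i)) * M i j * cis (\<theta> j)) / of_nat d"
proof -
  have "of_real (sqrt (real d)) * of_real (sqrt (real d)) = (of_nat d :: complex)"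
    by (simp flip: of_real_mult)
  then have entry: "cnj (cis (\<theta> i) / of_real (sqrt (real d))) * M i j * (cis (\<theta> j) / of_real (sqrt (real d)))
      = cnj (cis (\<theta> i)) * M i j * cis (\<theta> j) / of_nat d" for i j
    by (simp add: field_simps)
  then show ?thesis
    by (simp only: mc_expect_def entry sum_divide_distrib)
qed

lemma Re_mc_expect_le:
  assumes "0 < d"
  shows "Re (mc_expect d M \<theta>) \<le> entry_norm_sum d M / d"
proof -
  have "Re (mc_expect d M \<theta>) \<le> cmod (mc_expect d M \<theta>)"
    by (rule complex_Re_le_cmod)
  also have "\<dots> = cmod (\<Sum>i<d. \<Sum>j<d. cnj (cis (\<theta> i)) * M i j * cis (\<theta> j)) / d"
    using assms by (simp add: mc_expect_eq norm_divide)
  also have "\<dots> \<le> (\<Sum>i<d. \<Sum>j<d. cmod (cnj (cis (\<theta> i)) * M i j * cis (\<theta> j))) / d"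
    by (intro divide_right_mono order.trans[OF norm_sum] sum_mono norm_sum) simp
  also have "\<dots> = entry_norm_sum d M / d"
    by (simp add: entry_norm_sum_def norm_mult)
  finally show ?thesis .
qed

lemma coh_frac_le_entry_norm_sum:
  assumes "0 < d"
  shows "coh_frac d M \<le> entry_norm_sum d M / d"
proof -
  have "(\<lambda>_. 0) \<in> {\<theta>. \<forall>i<d. \<theta> i \<in> {0..2*pi}}"
    by simp
  then show ?thesis
    unfolding coh_frac_def using Re_mc_expect_le[OF assms] by (intro cSUP_least) auto
qed

lemma Re_mc_expect_le_coh_frac:
  assumes "0 < d" and "\<forall>i<d. \<theta> i \<in> {0..2*pi}"
  shows "Re (mc_expect d M \<theta>) \<le> coh_frac d M"
  unfolding coh_frac_def
  using assms Re_mc_expect_le[OF assms(1)]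
  by (intro cSUP_upper bdd_aboveI) auto

lemma cis_cocycle_cancel:
  assumes "a + b = 2 * of_int n * pi + c"
  shows "cnj (cis c) * cis a * cis b = 1"
proof -
  have "cnj (cis c) * cis a * cis b = cis (a + b - c)"
    by (simp add: cis_cnj cis_mult algebra_simps)
  also have "\<dots> = cis (2 * pi * of_int n)"
    using assms by (simp add: mult_ac)
  finally show ?thesis
    by (simp add: cis_multiple_2pi)
qed

lemma coh_frac_eq_entry_norm_sum:
  assumes "0 < d"
    and polar: "\<forall>i<d. \<forall>j<d. \<theta> i j \<in> {0..2*pi} \<and> M i j = of_real (cmod (M i j)) * cis (\<theta> i j)"
    and cocycle: "\<forall>i<d. \<forall>k<d. \<forall>j<d. \<exists>n::int. \<theta> i k + \<theta> k j = 2 * of_int n * pi + \<theta> i j"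
  shows "coh_frac d M = entry_norm_sum d M / d"
proof (rule antisym)
  show "coh_frac d M \<le> entry_norm_sum d M / d"
    using assms(1) by (rule coh_frac_le_entry_norm_sum)
next
  define \<phi> where "\<phi> i = \<theta> i 0" for i
  have aligned: "cnj (cis (\<phi> i)) * M i j * cis (\<phi> j) = of_real (cmod (M i j))"
    if ij: "i < d" "j < d" for i j
  proof -
    obtain n :: int where "\<theta> i j + \<theta> j 0 = 2 * of_int n * pi + \<theta> i 0"
      using cocycle[rule_format, OF ij assms(1)] by blast
    then have phases: "cnj (cis (\<phi> i)) * cis (\<theta> i j) * cis (\<phi> j) = 1"
      unfolding \<phi>_def by (rule cis_cocycle_cancel)
    define c where "c = cmod (M i j)"
    have "M i j = of_real c * cis (\<theta> i j)"
      using polar ij unfolding c_def by blast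
    then have "cnj (cis (\<phi> i)) * M i j * cis (\<phi> j)
        = of_real c * (cnj (cis (\<phi> i)) * cis (\<theta> i j) * cis (\<phi> j))"
      by (simp only: mult_ac)
    then show ?thesis
      unfolding phases c_def by simp
  qed
  have "mc_expect d M \<phi> = of_real (entry_norm_sum d M / d)"
    using assms(1) by (simp add: mc_expect_eq aligned entry_norm_sum_def)
  moreover have "Re (mc_expect d M \<phi>) \<le> coh_frac d M"
    using assms(1) polar by (intro Re_mc_expect_le_coh_frac) (auto simp: \<phi>_def)
  ultimately show "entry_norm_sum d M / d \<le> coh_frac d M"
    by simp
qed

lemma density_matrix_diag_nonneg:
  assumes "density_matrix d M" and "i < d"
  shows "0 \<le> Re (M i i)"
proof -
  define e :: "nat \<Rightarrow> complex" where "e k = of_bool (k = i)" for k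
  have pick: "(\<Sum>j<d. f j * e j) = f i" for f :: "nat \<Rightarrow> complex"
    using assms(2) by (simp add: e_def)
  have cnj_e: "cnj (e k) = e k" for k
    by (simp add: e_def of_bool_def)
  have "0 \<le> Re (\<Sum>k<d. \<Sum>j<d. cnj (e k) * M k j * e j)"
    using assms(1) unfolding density_matrix_def by blast
  also have "(\<Sum>k<d. \<Sum>j<d. cnj (e k) * M k j * e j) = (\<Sum>k<d. cnj (e k) * M k i)"
    by (simp only: pick)
  also have "\<dots> = (\<Sum>k<d. M k i * e k)"
    by (simp add: cnj_e mult.commute)
  also have "\<dots> = M i i"
    by (rule pick)
  finally show ?thesis .
qed

lemma density_matrix_cmod_diag:
  assumes "density_matrix d M" and "i < d"
  shows "cmod (M i i) = Re (M i i)"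
proof -
  have "M i i = cnj (M i i)"
    using assms unfolding density_matrix_def by blast
  then have "Im (M i i) = Im (cnj (M i i))"
    by (rule arg_cong)
  then have "Im (M i i) = 0"
    by simp
  then show ?thesis
    using density_matrix_diag_nonneg[OF assms] by (simp add: cmod_def)
qed

lemma density_matrix_diag_norm_sum:
  assumes "density_matrix d M"
  shows "(\<Sum>i<d. cmod (M i i)) = 1"
proof -
  have "(\<Sum>i<d. cmod (M i i)) = Re (\<Sum>i<d. M i i)"
    using density_matrix_cmod_diag[OF assms] by simp
  also have "(\<Sum>i<d. M i i) = 1"
    using assms unfolding density_matrix_def by blast
  finally show ?thesis
    by simp
qed

text \<open>The entries \<open>\<rho>\<^sub>0\<^sub>3, \<rho>\<^sub>3\<^sub>0, \<rho>\<^sub>1\<^sub>2, \<rho>\<^sub>2\<^sub>1\<close> enter neither partial trace, and each diagonal entry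
  enters both.\<close>

lemma entry_norm_sum_ptraces_le:
  "entry_norm_sum 2 (ptrace_b M) + entry_norm_sum 2 (ptrace_a M)
     \<le> entry_norm_sum 4 M + (\<Sum>i<4. cmod (M i i))"
proof -
  have "entry_norm_sum 2 (ptrace_b M)
      = cmod (M 0 0 + M 1 1) + cmod (M 0 2 + M 1 3) + cmod (M 2 0 + M 3 1) + cmod (M 2 2 + M 3 3)"
    by (simp add: entry_norm_sum_def ptrace_b_def eval_nat_numeral)
  moreover have "entry_norm_sum 2 (ptrace_a M)
      = cmod (M 0 0 + M 2 2) + cmod (M 0 1 + M 2 3) + cmod (M 1 0 + M 3 2) + cmod (M 1 1 + M 3 3)"
    by (simp add: entry_norm_sum_def ptrace_a_def eval_nat_numeral)
  moreover have "entry_norm_sum 4 M =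
      cmod (M 0 0) + cmod (M 0 1) + cmod (M 0 2) + cmod (M 0 3) +
      cmod (M 1 0) + cmod (M 1 1) + cmod (M 1 2) + cmod (M 1 3) +
      cmod (M 2 0) + cmod (M 2 1) + cmod (M 2 2) + cmod (M 2 3) +
      cmod (M 3 0) + cmod (M 3 1) + cmod (M 3 2) + cmod (M 3 3)"
    by (simp add: entry_norm_sum_def eval_nat_numeral)
  moreover have "(\<Sum>i<4. cmod (M i i)) = cmod (M 0 0) + cmod (M 1 1) + cmod (M 2 2) + cmod (M 3 3)"
    by (simp add: eval_nat_numeral)
  ultimately show ?thesis
    using norm_triangle_ineq[of "M 0 0" "M 1 1"] norm_triangle_ineq[of "M 0 2" "M 1 3"]
      norm_triangle_ineq[of "M 2 0" "M 3 1"] norm_triangle_ineq[of "M 2 2" "M 3 3"]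
      norm_triangle_ineq[of "M 0 0" "M 2 2"] norm_triangle_ineq[of "M 0 1" "M 2 3"]
      norm_triangle_ineq[of "M 1 0" "M 3 2"] norm_triangle_ineq[of "M 1 1" "M 3 3"]
      norm_ge_zero[of "M 0 3"] norm_ge_zero[of "M 3 0"]
      norm_ge_zero[of "M 1 2"] norm_ge_zero[of "M 2 1"]
    by linarith
qed

theorem theorem5:
  fixes \<rho> :: "nat \<Rightarrow> nat \<Rightarrow> complex"
  assumes "density_matrix 4 \<rho>"
    and "\<exists>\<theta> :: nat \<Rightarrow> nat \<Rightarrow> real.
           (\<forall>i<4. \<forall>j<4. \<theta> i j \<in> {0..2*pi} \<and>
                         \<rho> i j = complex_of_real (cmod (\<rho> i j)) * cis (\<theta> i j)) \<and>
           (\<forall>i<4. \<forall>k<4. \<forall>j<4. \<exists>n::int. \<theta> i k + \<theta> k j = 2 * real_of_int n * pi + \<theta> i j)"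
  shows "coh_frac 2 (ptrace_b \<rho>) + coh_frac 2 (ptrace_a \<rho>) \<le> 2 * coh_frac 4 \<rho> + 1/2"
proof -
  obtain \<theta> :: "nat \<Rightarrow> nat \<Rightarrow> real"
    where polar: "\<forall>i<4. \<forall>j<4. \<theta> i j \<in> {0..2*pi} \<and> \<rho> i j = of_real (cmod (\<rho> i j)) * cis (\<theta> i j)"
      and cocycle: "\<forall>i<4. \<forall>k<4. \<forall>j<4. \<exists>n::int. \<theta> i k + \<theta> k j = 2 * of_int n * pi + \<theta> i j"
    using assms(2) by blast
  have global: "coh_frac 4 \<rho> = entry_norm_sum 4 \<rho> / 4"
    using coh_frac_eq_entry_norm_sum[OF _ polar cocycle] by simp
  have "coh_frac 2 (ptrace_b \<rho>) \<le> entry_norm_sum 2 (ptrace_b \<rho>) / 2"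
    and "coh_frac 2 (ptrace_a \<rho>) \<le> entry_norm_sum 2 (ptrace_a \<rho>) / 2"
    using coh_frac_le_entry_norm_sum[of 2] by simp_all
  moreover have "entry_norm_sum 2 (ptrace_b \<rho>) + entry_norm_sum 2 (ptrace_a \<rho>)
      \<le> entry_norm_sum 4 \<rho> + 1"
    using entry_norm_sum_ptraces_le[of \<rho>] density_matrix_diag_norm_sum[OF assms(1)] by simp
  ultimately show ?thesis
    unfolding global by linarith
qed

end
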